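(* In the even setting below, assume $N_k$ is invertible and let $c_k^0,\dots,c_k^{m-1}$ be the $n\times n$ blocks of the unique $mn\times n$ matrix $C_k=(c_k^0;\dots;c_k^{m-1})$ with $N_kC_k=F^{(k)}_{m}$. Then each $c_k^i$ is homogeneous (all entries being rational functions homogeneous of the same degree) with respect to the scaling $a_j^{2r+1}\mapsto\mu a_j^{2r+1}$, $a_j^{2r}\mapsto a_j^{2r}$, and $\deg c_k^{2\ell}=0$, $\deg c_k^{2\ell+1}=1$ for $\ell=0,\dots,s-1$.
   Context: Even setting: integers $n\ge1$, $s\ge 2$, $m=2s$. For each $k\in\mathbb Z$ let $a_k^0,\dots,a_k^{m-1}$ be $n\times n$ matrices with indeterminate entries, $N$-periodic in $k$. $Q_k$ is the $mn\times mn$ block matrix with $I_n$ in blocks $(i+1,i)$, last block column $(a_k^0;\dots;a_k^{m-1})$, $O_n$ elsewhere. $r_k=(O_n;a_k^1;O_n;a_k^3;\dots;O_n;a_k^{2s-1})$. $F^{(k)}_0=r_k$, $F^{(k)}_\ell=Q_k\cdots Q_{k+\ell-1}r_{k+\ell}$, $N_k=(F^{(k)}_0,\dots,F^{(k)}_{m-1})$. A rational function $f$ of the entries is homogeneous of degree $d$ if applying the scaling multiplies it by $\mu^d$ for all $\mu\ne0$. (The blocks $c_k^i$ are the coordinates of the map $\bar T(V_k)=(V_k,\dots,V_{k+m-1})r_k$ before normalization.) *)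

theory Defs
  imports "Jordan_Normal_Form.Matrix"
begin

text \<open>Coefficient data: a k i is the n x n block a_k^i (k an integer index, i < m).
  Matrices over an arbitrary field; the "indeterminate" statement about rational functions
  is rendered as the corresponding identity for every evaluation in every field.\<close>

definition Qmat :: "nat \<Rightarrow> nat \<Rightarrow> (int \<Rightarrow> nat \<Rightarrow> 'a::field mat) \<Rightarrow> int \<Rightarrow> 'a mat" where
  "Qmat n m a k = mat (m*n) (m*n) (\<lambda>(r,c).
     if c div n = m - 1 then a k (r div n) $$ (r mod n, c mod n)
     else if r div n = c div n + 1 \<and> r mod n = c mod n then 1 else 0)"

definition rvec :: "nat \<Rightarrow> nat \<Rightarrow> (int \<Rightarrow> nat \<Rightarrow> 'a::field mat) \<Rightarrow> int \<Rightarrow> 'a mat" where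
  "rvec n m a k = mat (m*n) n (\<lambda>(r,c).
     if odd (r div n) then a k (r div n) $$ (r mod n, c) else 0)"

fun Qprod :: "nat \<Rightarrow> nat \<Rightarrow> (int \<Rightarrow> nat \<Rightarrow> 'a::field mat) \<Rightarrow> int \<Rightarrow> nat \<Rightarrow> 'a mat" where
  "Qprod n m a k 0 = 1\<^sub>m (m*n)"
| "Qprod n m a k (Suc l) = Qprod n m a k l * Qmat n m a (k + int l)"

definition Fmat :: "nat \<Rightarrow> nat \<Rightarrow> (int \<Rightarrow> nat \<Rightarrow> 'a::field mat) \<Rightarrow> int \<Rightarrow> nat \<Rightarrow> 'a mat" where
  "Fmat n m a k l = Qprod n m a k l * rvec n m a (k + int l)"

text \<open>N_k = (F_0, ..., F_{m-1}), block column l is F_l.\<close>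
definition Nmat :: "nat \<Rightarrow> nat \<Rightarrow> (int \<Rightarrow> nat \<Rightarrow> 'a::field mat) \<Rightarrow> int \<Rightarrow> 'a mat" where
  "Nmat n m a k = mat (m*n) (m*n) (\<lambda>(r,c). Fmat n m a k (c div n) $$ (r, c mod n))"

definition blk :: "nat \<Rightarrow> 'a mat \<Rightarrow> nat \<Rightarrow> 'a mat" where
  "blk n C i = mat n n (\<lambda>(p,q). C $$ (i*n + p, q))"

definition scale_odd :: "'a::field \<Rightarrow> (int \<Rightarrow> nat \<Rightarrow> 'a mat) \<Rightarrow> int \<Rightarrow> nat \<Rightarrow> 'a mat" where
  "scale_odd \<mu> a j i = (if odd i then \<mu> \<cdot>\<^sub>m a j i else a j i)"

end

theory Submission
  imports Defs "Jordan_Normal_Form.Determinant"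
begin

text \<open>Write \<open>V\<^sub>j\<close> for the first block column of \<open>Q\<^sub>k \<cdots> Q\<^sub>k\<^sub>+\<^sub>j\<^sub>-\<^sub>1\<close>. Block column \<open>i\<close> of
  \<open>Q\<^sub>k \<cdots> Q\<^sub>k\<^sub>+\<^sub>l\<^sub>-\<^sub>1\<close> is \<open>V\<^sub>l\<^sub>+\<^sub>i\<close>, and \<open>V\<^sub>j\<^sub>+\<^sub>m = \<Sum>\<^sub>i V\<^sub>j\<^sub>+\<^sub>i a\<^sub>k\<^sub>+\<^sub>j\<^sup>i\<close>. Hence every \<open>F\<^sub>l\<close> is a
  combination of the odd-indexed \<open>V\<^sub>1, V\<^sub>3, \<dots>, V\<^sub>2\<^sub>m\<^sub>-\<^sub>1\<close>: directly for even \<open>l\<close>, and after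
  eliminating \<open>V\<^sub>l\<^sub>+\<^sub>m\<close> by the recurrence for odd \<open>l\<close>. This factors \<open>N\<^sub>k = Z P\<close> and
  \<open>F\<^sub>m = Z R\<close> with \<open>Z = (V\<^sub>1, V\<^sub>3, \<dots>)\<close>. Scaling the odd coefficients by \<open>\<mu>\<close> multiplies the even
  block columns of \<open>P\<close> and all of \<open>R\<close> by \<open>\<mu>\<close>, and keeps \<open>Z\<close> nonsingular: a left null vector of
  the scaled \<open>Z\<close> sees the scaled and unscaled \<open>V\<^sub>j\<close> alike, by induction along the recurrence.
  So the scaled solution is \<open>diag(1, \<mu>, 1, \<mu>, \<dots>) C\<close>.\<close>

lemma sum_lessThan_mult_blocks:
  "(\<Sum>t<m*n. f t) = (\<Sum>i<m. \<Sum>p<n. (f::nat \<Rightarrow> 'a::comm_monoid_add) (i*n+p))"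
proof -
  have "(\<Sum>p<n. f (i*n+p)) = sum f {i*n..<i*n+n}" for i
    using sum.shift_bounds_nat_ivl[of f 0 "i*n" n] by (simp add: atLeast0LessThan add.commute)
  then show ?thesis by (simp add: sum.nat_group)
qed

lemma sum_lessThan_double_parity:
  "(\<Sum>j<2*m. f j) = (\<Sum>q<m. f (2*q)) + (\<Sum>q<m. (f::nat \<Rightarrow> 'a::comm_monoid_add) (2*q+1))"
  by (induction m) (simp_all add: ac_simps)

lemma sum_lessThan_shift_restrict:
  assumes "(l::nat) + m \<le> M"
  shows "(\<Sum>i<m. g (l+i)) = (\<Sum>j<M. if l \<le> j \<and> j < l+m then g j else (0::'a::comm_monoid_add))"
proof -
  have "{..<M} \<inter> {j. l \<le> j \<and> j < l+m} = {l..<l+m}" using assms by auto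
  then have "(\<Sum>j<M. if l \<le> j \<and> j < l+m then g j else 0) = sum g {l..<l+m}"
    using sum.inter_restrict[of "{..<M}" g "{j. l \<le> j \<and> j < l+m}"] by simp
  also have "\<dots> = (\<Sum>i<m. g (l+i))"
    using sum.shift_bounds_nat_ivl[of g 0 l m] by (simp add: atLeast0LessThan add.commute)
  finally show ?thesis by simp
qed

lemma block_index_less: "i < m \<Longrightarrow> p < n \<Longrightarrow> i*n+p < m*(n::nat)"
  using mult_le_mono1[of "Suc i" m n] by simp

lemma block_index_div_mod [simp]: "p < n \<Longrightarrow> (i*n+p) div n = i \<and> (i*n+p) mod (n::nat) = p"
  by auto

lemma block_index_bounds: "t < m*n \<Longrightarrow> t div n < m \<and> t mod n < (n::nat)"
  by (cases "n = 0") (auto simp: less_mult_imp_div_less)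

lemma index_mult_mat_sum:
  "A \<in> carrier_mat nr nk \<Longrightarrow> B \<in> carrier_mat nk nc \<Longrightarrow> i < nr \<Longrightarrow> j < nc \<Longrightarrow>
   (A * B) $$ (i,j) = (\<Sum>t<nk. A $$ (i,t) * B $$ (t,j))"
  by (auto simp: scalar_prod_def atLeast0LessThan intro!: sum.cong)

lemma invertible_mat_inverse_carrier:
  assumes "A \<in> carrier_mat N N" "invertible_mat A"
  obtains B where "B \<in> carrier_mat N N" "A * B = 1\<^sub>m N" "B * A = 1\<^sub>m N"
proof -
  from assms(2) obtain B where AB: "A * B = 1\<^sub>m (dim_row A)" and BA: "B * A = 1\<^sub>m (dim_row B)"
    unfolding invertible_mat_def inverts_mat_def by blast
  have "B \<in> carrier_mat N N"
    using arg_cong[OF AB, of dim_col] arg_cong[OF BA, of dim_col] assms(1) by auto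
  with AB BA assms(1) show ?thesis by (intro that) auto
qed

lemma invertible_mat_iff_det:
  assumes A: "(A::'a::field mat) \<in> carrier_mat N N"
  shows "invertible_mat A \<longleftrightarrow> det A \<noteq> 0"
proof
  assume "invertible_mat A"
  then obtain B where B: "B \<in> carrier_mat N N" "A * B = 1\<^sub>m N"
    by (rule invertible_mat_inverse_carrier[OF A])
  then have "det A * det B = 1" using det_mult[OF A B(1)] by simp
  then show "det A \<noteq> 0" by auto
next
  assume "det A \<noteq> 0"
  from det_non_zero_imp_unit[OF A this, of "()"]
  obtain B where "B \<in> carrier_mat N N" "B * A = 1\<^sub>m N" "A * B = 1\<^sub>m N"
    unfolding Units_def by (auto simp: ring_mat_def)
  then show "invertible_mat A" using A unfolding invertible_mat_def inverts_mat_def by auto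
qed

lemma invertible_mat_mult_left_cancel:
  assumes A: "A \<in> carrier_mat N N" "invertible_mat A"
    and XY: "X \<in> carrier_mat N M" "Y \<in> carrier_mat N M" "A * X = A * Y"
  shows "X = Y"
proof -
  obtain B where B: "B \<in> carrier_mat N N" "B * A = 1\<^sub>m N" by (rule invertible_mat_inverse_carrier[OF A])
  have "X = (B * A) * X" using B XY by simp
  also have "\<dots> = B * (A * X)" using A B XY by (intro assoc_mult_mat)
  also have "\<dots> = B * (A * Y)" by (simp only: XY(3))
  also have "\<dots> = (B * A) * Y" using A B XY by (intro assoc_mult_mat[symmetric])
  finally show ?thesis using B XY by simp
qed

lemma Qmat_carrier [simp]: "Qmat n m a k \<in> carrier_mat (m*n) (m*n)"
  by (simp add: Qmat_def)

lemma Qprod_carrier [simp]: "Qprod n m a k l \<in> carrier_mat (m*n) (m*n)"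
  by (induction l) auto

lemma rvec_carrier [simp]: "rvec n m a k \<in> carrier_mat (m*n) n"
  by (simp add: rvec_def)

lemma Fmat_carrier [simp]: "Fmat n m a k l \<in> carrier_mat (m*n) n"
  unfolding Fmat_def by (rule mult_carrier_mat[OF Qprod_carrier rvec_carrier])

lemma Nmat_carrier [simp]: "Nmat n m a k \<in> carrier_mat (m*n) (m*n)"
  by (simp add: Nmat_def)

lemma index_Qmat:
  "r < m*n \<Longrightarrow> c < m*n \<Longrightarrow> Qmat n m a k $$ (r,c) =
     (if c div n = m - 1 then a k (r div n) $$ (r mod n, c mod n)
      else if r div n = c div n + 1 \<and> r mod n = c mod n then 1 else 0)"
  by (simp add: Qmat_def)

lemma Qprod_Suc_block_col:
  assumes "r < m*n" "Suc i < m" "p < n"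
  shows "Qprod n m a k (Suc l) $$ (r, i*n+p) = Qprod n m a k l $$ (r, Suc i*n+p)"
proof -
  have ipn: "i*n+p < m*n" and sp: "Suc i*n+p < m*n"
    using block_index_less[of i m p n] block_index_less[of "Suc i" m p n] assms by auto
  have "Qprod n m a k (Suc l) $$ (r,i*n+p)
      = (\<Sum>t<m*n. Qprod n m a k l $$ (r,t) * Qmat n m a (k+int l) $$ (t, i*n+p))"
    using assms ipn by (simp only: Qprod.simps, intro index_mult_mat_sum) auto
  also have "\<dots> = (\<Sum>t<m*n. if t = Suc i*n+p then Qprod n m a k l $$ (r,t) else 0)"
  proof (rule sum.cong)
    fix t assume "t \<in> {..<m*n}"
    moreover have "(t div n = Suc i \<and> t mod n = p) = (t = Suc i*n+p)"
      using assms by (metis block_index_div_mod div_mult_mod_eq mult.commute)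
    ultimately show "Qprod n m a k l $$ (r,t) * Qmat n m a (k+int l) $$ (t, i*n+p)
        = (if t = Suc i*n+p then Qprod n m a k l $$ (r,t) else 0)"
      using assms ipn by (auto simp: index_Qmat)
  qed simp
  also have "\<dots> = Qprod n m a k l $$ (r, Suc i*n+p)" using sp by simp
  finally show ?thesis .
qed

lemma Qprod_block_col:
  "r < m*n \<Longrightarrow> i < m \<Longrightarrow> p < n \<Longrightarrow> Qprod n m a k l $$ (r, i*n+p) = Qprod n m a k (l+i) $$ (r,p)"
proof (induction i arbitrary: l)
  case (Suc i)
  then show ?case using Qprod_Suc_block_col[of r m n i p a k l] Suc.IH[of "Suc l"] by simp
qed simp

lemma Qprod_initial:
  "r < m*n \<Longrightarrow> j < m \<Longrightarrow> q < n \<Longrightarrow> Qprod n m a k j $$ (r,q) = (if r = j*n+q then 1 else 0)"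
  using Qprod_block_col[of r m n j q a k 0] block_index_less[of j m q n] by simp

lemma Qprod_recurrence:
  assumes "r < m*n" "p < n" "0 < m"
  shows "Qprod n m a k (l+m) $$ (r,p)
       = (\<Sum>i<m. \<Sum>q<n. Qprod n m a k (l+i) $$ (r,q) * a (k+int l) i $$ (q,p))"
proof -
  have c: "(m-1)*n+p < m*n" using block_index_less[of "m-1" m p n] assms by simp
  have "Qprod n m a k (l+m) $$ (r,p) = Qprod n m a k (Suc l) $$ (r,(m-1)*n+p)"
    using Qprod_block_col[of r m n "m-1" p a k "Suc l"] assms by simp
  also have "\<dots> = (\<Sum>t<m*n. Qprod n m a k l $$ (r,t) * Qmat n m a (k+int l) $$ (t, (m-1)*n+p))"
    using assms c by (simp only: Qprod.simps, intro index_mult_mat_sum) auto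
  also have "\<dots> = (\<Sum>t<m*n. Qprod n m a k l $$ (r,t) * a (k+int l) (t div n) $$ (t mod n, p))"
    using assms c by (intro sum.cong) (auto simp: index_Qmat)
  also have "\<dots> = (\<Sum>i<m. \<Sum>q<n. Qprod n m a k (l+i) $$ (r,q) * a (k+int l) i $$ (q,p))"
    using assms by (subst sum_lessThan_mult_blocks) (intro sum.cong; simp add: Qprod_block_col)
  finally show ?thesis .
qed

lemma index_Fmat:
  assumes "r < m*n" "c < n"
  shows "Fmat n m a k l $$ (r,c)
       = (\<Sum>i<m. \<Sum>q<n. Qprod n m a k (l+i) $$ (r,q) * (if odd i then a (k+int l) i $$ (q,c) else 0))"
proof -
  have "Fmat n m a k l $$ (r,c) = (\<Sum>t<m*n. Qprod n m a k l $$ (r,t) * rvec n m a (k+int l) $$ (t,c))"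
    using assms by (simp only: Fmat_def, intro index_mult_mat_sum) auto
  also have "\<dots> = (\<Sum>i<m. \<Sum>q<n. Qprod n m a k (l+i) $$ (r,q) * (if odd i then a (k+int l) i $$ (q,c) else 0))"
    using assms by (subst sum_lessThan_mult_blocks) (auto simp: Qprod_block_col rvec_def block_index_less intro!: sum.cong)
  finally show ?thesis .
qed

lemma sum_Qprod_window:
  assumes "l \<le> m"
  shows "(\<Sum>i<m. \<Sum>q<n. Qprod n m a k (l+i) $$ (r,q) * w i q)
       = (\<Sum>j<2*m. \<Sum>q<n. Qprod n m a k j $$ (r,q) * (if l \<le> j \<and> j < l+m then w (j-l) q else 0))"
proof -
  let ?g = "\<lambda>j. \<Sum>q<n. Qprod n m a k j $$ (r,q) * w (j-l) q"
  have "(\<Sum>i<m. \<Sum>q<n. Qprod n m a k (l+i) $$ (r,q) * w i q) = (\<Sum>i<m. ?g (l+i))"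
    by simp
  also have "\<dots> = (\<Sum>j<2*m. if l \<le> j \<and> j < l+m then ?g j else 0)"
    using assms by (intro sum_lessThan_shift_restrict) simp
  also have "\<dots> = (\<Sum>j<2*m. \<Sum>q<n. Qprod n m a k j $$ (r,q) * (if l \<le> j \<and> j < l+m then w (j-l) q else 0))"
    by (intro sum.cong) auto
  finally show ?thesis .
qed

section \<open>Expansion in the odd-indexed block columns\<close>

text \<open>Coefficient of entry \<open>p\<close> of \<open>V\<^sub>j\<close> in column \<open>c\<close> of \<open>F\<^sub>l\<close>; for odd \<open>l\<close> the term \<open>V\<^sub>l\<^sub>+\<^sub>m\<close>
  replaces the even-indexed ones via the recurrence. It vanishes for even \<open>j\<close> when \<open>m\<close> is even.\<close>

definition odd_coeff :: "nat \<Rightarrow> (int \<Rightarrow> nat \<Rightarrow> 'a::field mat) \<Rightarrow> int \<Rightarrow> nat \<Rightarrow> nat \<Rightarrow> nat \<Rightarrow> nat \<Rightarrow> 'a" where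
  "odd_coeff m a k l j p c =
     (if odd l \<and> j = l + m then (if p = c then 1 else 0)
      else if l \<le> j \<and> j < l + m \<and> odd j then (if even l then 1 else -1) * a (k + int l) (j - l) $$ (p,c)
      else 0)"

definition Zmat :: "nat \<Rightarrow> nat \<Rightarrow> (int \<Rightarrow> nat \<Rightarrow> 'a::field mat) \<Rightarrow> int \<Rightarrow> 'a mat" where
  "Zmat n m a k = mat (m*n) (m*n) (\<lambda>(r,t). Qprod n m a k (2*(t div n)+1) $$ (r, t mod n))"

definition Pmat :: "nat \<Rightarrow> nat \<Rightarrow> (int \<Rightarrow> nat \<Rightarrow> 'a::field mat) \<Rightarrow> int \<Rightarrow> 'a mat" where
  "Pmat n m a k = mat (m*n) (m*n) (\<lambda>(t,c). odd_coeff m a k (c div n) (2*(t div n)+1) (t mod n) (c mod n))"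

definition Rmat :: "nat \<Rightarrow> nat \<Rightarrow> (int \<Rightarrow> nat \<Rightarrow> 'a::field mat) \<Rightarrow> int \<Rightarrow> 'a mat" where
  "Rmat n m a k = mat (m*n) n (\<lambda>(t,c). odd_coeff m a k m (2*(t div n)+1) (t mod n) c)"

lemma Zmat_carrier [simp]: "Zmat n m a k \<in> carrier_mat (m*n) (m*n)"
  by (simp add: Zmat_def)

lemma dim_Zmat [simp]: "dim_row (Zmat n m a k) = m*n" "dim_col (Zmat n m a k) = m*n"
  by (simp_all add: Zmat_def)

lemma Pmat_carrier [simp]: "Pmat n m a k \<in> carrier_mat (m*n) (m*n)"
  by (simp add: Pmat_def)

lemma dim_Pmat [simp]: "dim_row (Pmat n m a k) = m*n" "dim_col (Pmat n m a k) = m*n"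
  by (simp_all add: Pmat_def)

lemma Rmat_carrier [simp]: "Rmat n m a k \<in> carrier_mat (m*n) n"
  by (simp add: Rmat_def)

lemma dim_Rmat [simp]: "dim_row (Rmat n m a k) = m*n" "dim_col (Rmat n m a k) = n"
  by (simp_all add: Rmat_def)

lemma Fmat_window_expansion:
  assumes "l \<le> m" "r < m*n" "c < n"
  shows "Fmat n m a k l $$ (r,c) = (\<Sum>j<2*m. \<Sum>q<n. Qprod n m a k j $$ (r,q) *
     (if l \<le> j \<and> j < l+m then if odd (j-l) then a (k+int l) (j-l) $$ (q,c) else 0 else 0))"
  unfolding index_Fmat[OF assms(2,3)] by (rule sum_Qprod_window[OF assms(1)])

lemma Qprod_recurrence_window:
  assumes "l < m" "r < m*n" "c < n"
  shows "Qprod n m a k (l+m) $$ (r,c) = (\<Sum>j<2*m. \<Sum>q<n. Qprod n m a k j $$ (r,q) *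
     (if l \<le> j \<and> j < l+m then a (k+int l) (j-l) $$ (q,c) else 0))"
  using assms by (simp add: Qprod_recurrence sum_Qprod_window)

lemma sum_Qprod_delta:
  assumes "j0 < 2*m" "c < n"
  shows "(\<Sum>j<2*m. \<Sum>q<n. Qprod n m a k j $$ (r,q) * (if j = j0 \<and> q = c then 1 else 0))
       = Qprod n m a k j0 $$ (r,c)"
proof -
  have "(\<Sum>q<n. Qprod n m a k j $$ (r,q) * (if j = j0 \<and> q = c then 1 else 0))
      = (if j = j0 then Qprod n m a k j $$ (r,c) else 0)" for j
    using assms by (cases "j = j0") (simp_all add: if_distrib cong: if_cong)
  then show ?thesis using assms by simp
qed

lemma sum_Qprod_odd_collapse:
  assumes "\<And>j q. even j \<Longrightarrow> X j q = 0" "r < m*n"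
  shows "(\<Sum>j<2*m. \<Sum>q<n. Qprod n m a k j $$ (r,q) * X j q)
       = (\<Sum>t<m*n. Zmat n m a k $$ (r,t) * X (2*(t div n)+1) (t mod n))"
  using assms by (subst sum_lessThan_double_parity, subst sum_lessThan_mult_blocks)
    (auto simp: Zmat_def block_index_less intro!: sum.cong)

text \<open>For odd \<open>l\<close>, adding the vanishing combination \<open>V\<^sub>l\<^sub>+\<^sub>m - \<Sum>\<^sub>i V\<^sub>l\<^sub>+\<^sub>i a\<^sub>k\<^sub>+\<^sub>l\<^sup>i\<close>
  cancels all terms at even indices.\<close>

lemma Fmat_odd_expansion:
  assumes "even m" "l \<le> m" "r < m*n" "c < n"
  shows "Fmat n m a k l $$ (r,c) = (\<Sum>t<m*n. Zmat n m a k $$ (r,t) * odd_coeff m a k l (2*(t div n)+1) (t mod n) c)"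
proof -
  have "Fmat n m a k l $$ (r,c) = (\<Sum>j<2*m. \<Sum>q<n. Qprod n m a k j $$ (r,q) * odd_coeff m a k l j q c)"
  proof (cases "even l")
    case True
    then show ?thesis using assms
      by (simp only: Fmat_window_expansion) (intro sum.cong refl arg_cong2[where f=times]; auto simp: odd_coeff_def)
  next
    case False
    with assms have "l < m" by (cases "l = m") auto
    let ?d = "\<lambda>j q. if j = l+m \<and> q = c then 1 else 0"
      and ?w = "\<lambda>j q. if l \<le> j \<and> j < l+m then a (k+int l) (j-l) $$ (q,c) else 0"
      and ?f = "\<lambda>j q. if l \<le> j \<and> j < l+m then if odd (j-l) then a (k+int l) (j-l) $$ (q,c) else 0 else 0"
    have "Fmat n m a k l $$ (r,c) = (\<Sum>j<2*m. \<Sum>q<n. Qprod n m a k j $$ (r,q) * ?f j q)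
        + ((\<Sum>j<2*m. \<Sum>q<n. Qprod n m a k j $$ (r,q) * ?d j q) - (\<Sum>j<2*m. \<Sum>q<n. Qprod n m a k j $$ (r,q) * ?w j q))"
      using assms \<open>l < m\<close> by (simp add: Fmat_window_expansion sum_Qprod_delta Qprod_recurrence_window)
    also have "\<dots> = (\<Sum>j<2*m. \<Sum>q<n. Qprod n m a k j $$ (r,q) * (?f j q + (?d j q - ?w j q)))"
      by (simp add: sum.distrib sum_subtractf distrib_left right_diff_distrib)
    also have "\<dots> = (\<Sum>j<2*m. \<Sum>q<n. Qprod n m a k j $$ (r,q) * odd_coeff m a k l j q c)"
      using False assms by (intro sum.cong refl arg_cong2[where f=times]) (auto simp: odd_coeff_def)
    finally show ?thesis .
  qed
  also have "\<dots> = (\<Sum>t<m*n. Zmat n m a k $$ (r,t) * odd_coeff m a k l (2*(t div n)+1) (t mod n) c)"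
    using assms by (intro sum_Qprod_odd_collapse) (auto simp: odd_coeff_def)
  finally show ?thesis .
qed

lemma Nmat_eq_Zmat_Pmat:
  assumes "even m"
  shows "Nmat n m a k = Zmat n m a k * Pmat n m a k"
proof (rule eq_matI)
  fix r c assume "r < dim_row (Zmat n m a k * Pmat n m a k)" "c < dim_col (Zmat n m a k * Pmat n m a k)"
  then have rc: "r < m*n" "c < m*n" by auto
  then have "c mod n < n" "c div n < m" using block_index_bounds by auto
  then show "Nmat n m a k $$ (r,c) = (Zmat n m a k * Pmat n m a k) $$ (r,c)"
    using assms rc by (subst index_mult_mat_sum[OF Zmat_carrier Pmat_carrier])
      (simp_all add: Nmat_def Fmat_odd_expansion Pmat_def)
qed (auto simp: Nmat_def)

lemma Fmat_eq_Zmat_Rmat: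
  assumes "even m"
  shows "Fmat n m a k m = Zmat n m a k * Rmat n m a k"
proof (rule eq_matI)
  fix r c assume "r < dim_row (Zmat n m a k * Rmat n m a k)" "c < dim_col (Zmat n m a k * Rmat n m a k)"
  then have rc: "r < m*n" "c < n" by auto
  then show "Fmat n m a k m $$ (r,c) = (Zmat n m a k * Rmat n m a k) $$ (r,c)"
    using assms by (subst index_mult_mat_sum[OF Zmat_carrier Rmat_carrier])
      (simp_all add: Fmat_odd_expansion Rmat_def)
qed (use carrier_matD[OF Fmat_carrier[of n m a k m]] in auto)

section \<open>The scaling of the odd coefficients\<close>

lemma index_scale_odd:
  assumes "\<And>j i. i < m \<Longrightarrow> a j i \<in> carrier_mat n n" "i < m" "p < n" "q < n"
  shows "scale_odd \<mu> a k i $$ (p,q) = (if odd i then \<mu> else 1) * a k i $$ (p,q)"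
  using assms carrier_matD[OF assms(1)[OF assms(2)]] by (simp add: scale_odd_def)

lemma odd_coeff_scale_odd:
  assumes "\<And>j i. i < m \<Longrightarrow> a j i \<in> carrier_mat n n" "p < n" "c < n"
  shows "odd_coeff m (scale_odd \<mu> a) k l j p c = (if even l then \<mu> else 1) * odd_coeff m a k l j p c"
  using assms index_scale_odd[OF assms(1), where i="j - l" and p=p and q=c and \<mu>=\<mu>] by (auto simp: odd_coeff_def)

definition parity_diag :: "nat \<Rightarrow> nat \<Rightarrow> 'a::field \<Rightarrow> 'a \<Rightarrow> 'a mat" where
  "parity_diag n m x y = mat (m*n) (m*n) (\<lambda>(i,j). if i = j then (if even (i div n) then x else y) else 0)"

lemma parity_diag_carrier [simp]: "parity_diag n m x y \<in> carrier_mat (m*n) (m*n)"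
  by (simp add: parity_diag_def)

lemma dim_parity_diag [simp]: "dim_row (parity_diag n m x y) = m*n" "dim_col (parity_diag n m x y) = m*n"
  by (simp_all add: parity_diag_def)

lemma index_mult_parity_diag:
  assumes "A \<in> carrier_mat N (m*n)" "t < N" "c < m*n"
  shows "(A * parity_diag n m x y) $$ (t,c) = A $$ (t,c) * (if even (c div n) then x else y)"
proof -
  have "(A * parity_diag n m x y) $$ (t,c) = (\<Sum>s<m*n. A $$ (t,s) * parity_diag n m x y $$ (s,c))"
    using assms by (intro index_mult_mat_sum[OF assms(1) parity_diag_carrier])
  also have "\<dots> = (\<Sum>s<m*n. if s = c then A $$ (t,c) * (if even (c div n) then x else y) else 0)"
    using assms by (intro sum.cong) (auto simp: parity_diag_def)
  finally show ?thesis using assms by simp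
qed

lemma index_parity_diag_mult:
  assumes "B \<in> carrier_mat (m*n) N" "t < m*n" "c < N"
  shows "(parity_diag n m x y * B) $$ (t,c) = (if even (t div n) then x else y) * B $$ (t,c)"
proof -
  have "(parity_diag n m x y * B) $$ (t,c) = (\<Sum>s<m*n. parity_diag n m x y $$ (t,s) * B $$ (s,c))"
    using assms by (intro index_mult_mat_sum[OF parity_diag_carrier assms(1)])
  also have "\<dots> = (\<Sum>s<m*n. if s = t then (if even (t div n) then x else y) * B $$ (t,c) else 0)"
    using assms by (intro sum.cong) (auto simp: parity_diag_def)
  finally show ?thesis using assms by simp
qed

lemma det_parity_diag_nonzero:
  assumes "x \<noteq> 0" "y \<noteq> 0"
  shows "det (parity_diag n m x y) \<noteq> 0"
proof -
  have "det (parity_diag n m x y) = prod_list (diag_mat (parity_diag n m x y))"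
    by (rule det_upper_triangular[of _ "m*n"]) (auto simp: upper_triangular_def parity_diag_def)
  also have "\<dots> = (\<Prod>i = 0..<m*n. parity_diag n m x y $$ (i,i))"
    by (simp add: prod_list_diag_prod parity_diag_def)
  finally show ?thesis using assms by (simp add: parity_diag_def)
qed

lemma blk_parity_diag_mult:
  assumes "C \<in> carrier_mat (m*n) n" "i < m"
  shows "blk n (parity_diag n m x y * C) i = (if even i then x else y) \<cdot>\<^sub>m blk n C i"
proof (rule eq_matI)
  fix p q assume "p < dim_row ((if even i then x else y) \<cdot>\<^sub>m blk n C i)"
    "q < dim_col ((if even i then x else y) \<cdot>\<^sub>m blk n C i)"
  then have "p < n" "q < n" by (auto simp: blk_def)
  with assms show "blk n (parity_diag n m x y * C) i $$ (p,q) = ((if even i then x else y) \<cdot>\<^sub>m blk n C i) $$ (p,q)"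
    by (simp add: blk_def index_parity_diag_mult block_index_less del: index_mult_mat(1))
qed (auto simp: blk_def)

lemma Pmat_scale_odd:
  assumes "\<And>j i. i < m \<Longrightarrow> a j i \<in> carrier_mat n n"
  shows "Pmat n m (scale_odd \<mu> a) k = Pmat n m a k * parity_diag n m \<mu> 1"
proof (rule eq_matI)
  fix t c assume "t < dim_row (Pmat n m a k * parity_diag n m \<mu> 1)" "c < dim_col (Pmat n m a k * parity_diag n m \<mu> 1)"
  then have tc: "t < m*n" "c < m*n" by auto
  then have "t mod n < n" "c mod n < n" using block_index_bounds by auto
  with tc show "Pmat n m (scale_odd \<mu> a) k $$ (t,c) = (Pmat n m a k * parity_diag n m \<mu> 1) $$ (t,c)"
    by (subst index_mult_parity_diag[OF Pmat_carrier]) (simp_all add: Pmat_def odd_coeff_scale_odd[OF assms])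
qed auto

lemma Rmat_scale_odd:
  assumes "\<And>j i. i < m \<Longrightarrow> a j i \<in> carrier_mat n n" "even m"
  shows "Rmat n m (scale_odd \<mu> a) k = \<mu> \<cdot>\<^sub>m Rmat n m a k"
proof (rule eq_matI)
  fix t c assume "t < dim_row (\<mu> \<cdot>\<^sub>m Rmat n m a k)" "c < dim_col (\<mu> \<cdot>\<^sub>m Rmat n m a k)"
  then have tc: "t < m*n" "c < n" by auto
  then have "t mod n < n" using block_index_bounds by auto
  with tc assms(2) show "Rmat n m (scale_odd \<mu> a) k $$ (t,c) = (\<mu> \<cdot>\<^sub>m Rmat n m a k) $$ (t,c)"
    by (simp add: Rmat_def odd_coeff_scale_odd[OF assms(1)])
qed auto

section \<open>Nonsingularity of the scaled odd frame\<close>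

definition left_comb :: "nat \<Rightarrow> nat \<Rightarrow> (nat \<Rightarrow> 'a) \<Rightarrow> (int \<Rightarrow> nat \<Rightarrow> 'a::field mat) \<Rightarrow> int \<Rightarrow> nat \<Rightarrow> nat \<Rightarrow> 'a" where
  "left_comb n m v a k j q = (\<Sum>r<m*n. v r * Qprod n m a k j $$ (r,q))"

lemma left_comb_initial: "j < m \<Longrightarrow> q < n \<Longrightarrow> left_comb n m v a k j q = v (j*n+q)"
  by (simp add: left_comb_def Qprod_initial if_distrib block_index_less cong: if_cong)

lemma left_comb_recurrence:
  assumes "q < n" "0 < m"
  shows "left_comb n m v a k (j+m) q
       = (\<Sum>i<m. \<Sum>p<n. left_comb n m v a k (j+i) p * a (k+int j) i $$ (p,q))"
proof -
  have "left_comb n m v a k (j+m) q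
      = (\<Sum>r<m*n. \<Sum>i<m. \<Sum>p<n. v r * Qprod n m a k (j+i) $$ (r,p) * a (k+int j) i $$ (p,q))"
    using assms by (simp add: left_comb_def Qprod_recurrence sum_distrib_left mult.assoc)
  also have "\<dots> = (\<Sum>i<m. \<Sum>p<n. \<Sum>r<m*n. v r * Qprod n m a k (j+i) $$ (r,p) * a (k+int j) i $$ (p,q))"
    by (subst sum.swap, rule sum.cong[OF refl], rule sum.swap)
  finally show ?thesis by (simp add: left_comb_def sum_distrib_right)
qed

lemma index_transpose_Zmat_mult_vec:
  assumes "v \<in> carrier_vec (m*n)" "t < m*n"
  shows "(transpose_mat (Zmat n m a k) *\<^sub>v v) $ t = left_comb n m (($) v) a k (2*(t div n)+1) (t mod n)"
  using assms by (auto simp: scalar_prod_def atLeast0LessThan mult.commute left_comb_def Zmat_def intro!: sum.cong)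

text \<open>If \<open>v\<^sup>T\<close> annihilates every scaled odd \<open>V\<^sub>j\<close>, it cannot tell the scaled \<open>V\<^sub>j\<close> from the
  unscaled ones: in the recurrence for an even (odd) start index only the unscaled (scaled) terms
  survive.\<close>

lemma left_comb_scale_odd_eq:
  assumes carr: "\<And>j i. i < m \<Longrightarrow> a j i \<in> carrier_mat n n" and "even m" "\<mu> \<noteq> 0"
    and null: "\<And>j q. odd j \<Longrightarrow> j < 2*m \<Longrightarrow> q < n \<Longrightarrow> left_comb n m v (scale_odd \<mu> a) k j q = 0"
  shows "j < 2*m \<Longrightarrow> q < n \<Longrightarrow> left_comb n m v a k j q = left_comb n m v (scale_odd \<mu> a) k j q"
proof (induction j arbitrary: q rule: less_induct)
  case (less j)
  let ?b = "scale_odd \<mu> a"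
  show ?case
  proof (cases "j < m")
    case True
    then show ?thesis using less.prems by (simp add: left_comb_initial)
  next
    case False
    with less.prems obtain j0 where j0: "j = j0 + m" "j0 < m"
      by (metis add.commute le_add_diff_inverse not_less add_less_cancel_left mult_2)
    define S where "S i = (\<Sum>p<n. left_comb n m v ?b k (j0+i) p * a (k+int j0) i $$ (p,q))" for i
    have A: "left_comb n m v a k j q = (\<Sum>i<m. S i)"
      using less j0 by (simp add: left_comb_recurrence S_def)
    have B: "left_comb n m v ?b k j q = (\<Sum>i<m. (if odd i then \<mu> else 1) * S i)"
      using less.prems j0 by (simp add: left_comb_recurrence S_def index_scale_odd[OF carr]
          sum_distrib_left ac_simps)
    show ?thesis
    proof (cases "even j0")
      case True
      then have "S i = 0" if "i < m" "odd i" for i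
        unfolding S_def using null[of "j0+i"] that j0 by auto
      then show ?thesis unfolding A B by (intro sum.cong) auto
    next
      case False
      then have "S i = 0" if "i < m" "even i" for i
        unfolding S_def using null[of "j0+i"] that j0 by auto
      then have "(\<Sum>i<m. (if odd i then \<mu> else 1) * S i) = \<mu> * (\<Sum>i<m. S i)"
        unfolding sum_distrib_left by (intro sum.cong) auto
      moreover have "left_comb n m v ?b k j q = 0" using null[of j q] False j0 \<open>even m\<close> less.prems by auto
      ultimately show ?thesis unfolding A B using \<open>\<mu> \<noteq> 0\<close> by simp
    qed
  qed
qed

lemma det_Zmat_scale_odd_nonzero:
  assumes carr: "\<And>j i. i < m \<Longrightarrow> a j i \<in> carrier_mat n n" and "even m" "\<mu> \<noteq> 0"
    and "det (Zmat n m a k) \<noteq> 0"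
  shows "det (Zmat n m (scale_odd \<mu> a) k) \<noteq> 0"
proof
  let ?Z' = "Zmat n m (scale_odd \<mu> a) k"
  assume "det ?Z' = 0"
  then have "det (transpose_mat ?Z') = 0" by (simp add: det_transpose[OF Zmat_carrier])
  then obtain v where v: "v \<in> carrier_vec (m*n)" "v \<noteq> 0\<^sub>v (m*n)" "transpose_mat ?Z' *\<^sub>v v = 0\<^sub>v (m*n)"
    using det_0_iff_vec_prod_zero_field[of "transpose_mat ?Z'" "m*n"] by auto
  have null: "left_comb n m (($) v) (scale_odd \<mu> a) k j q = 0" if "odd j" "j < 2*m" "q < n" for j q
  proof -
    obtain h where h: "j = 2*h+1" using \<open>odd j\<close> oddE by blast
    have hq: "h*n+q < m*n" using h that by (intro block_index_less) auto
    have "left_comb n m (($) v) (scale_odd \<mu> a) k j q = (transpose_mat ?Z' *\<^sub>v v) $ (h*n+q)"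
      using index_transpose_Zmat_mult_vec[OF v(1) hq] h \<open>q < n\<close> by simp
    then show ?thesis using v(3) hq by simp
  qed
  have "transpose_mat (Zmat n m a k) *\<^sub>v v = 0\<^sub>v (m*n)"
  proof (rule eq_vecI)
    fix t assume "t < dim_vec (0\<^sub>v (m*n) :: 'a vec)"
    then have t: "t < m*n" "t mod n < n" "2*(t div n)+1 < 2*m"
      using block_index_bounds[of t m n] by auto
    have "(transpose_mat (Zmat n m a k) *\<^sub>v v) $ t = left_comb n m (($) v) a k (2*(t div n)+1) (t mod n)"
      by (rule index_transpose_Zmat_mult_vec[OF v(1) t(1)])
    also have "\<dots> = 0"
      using left_comb_scale_odd_eq[OF carr assms(2,3) null] null[of "2*(t div n)+1" "t mod n"] t by simp
    finally show "(transpose_mat (Zmat n m a k) *\<^sub>v v) $ t = 0\<^sub>v (m*n) $ t" using t by simp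
  qed simp
  then have "det (transpose_mat (Zmat n m a k)) = 0"
    using det_0_iff_vec_prod_zero_field[of "transpose_mat (Zmat n m a k)" "m*n"] v by auto
  then show False using assms(4) by (simp add: det_transpose[OF Zmat_carrier])
qed

lemma parity_diag_mult_parity_diag:
  "parity_diag n m x y * parity_diag n m x' y' = parity_diag n m (x * x') (y * y')"
proof (rule eq_matI)
  fix i j assume "i < dim_row (parity_diag n m (x * x') (y * y'))" "j < dim_col (parity_diag n m (x * x') (y * y'))"
  then show "(parity_diag n m x y * parity_diag n m x' y') $$ (i,j) = parity_diag n m (x * x') (y * y') $$ (i,j)"
    by (simp add: index_parity_diag_mult[OF parity_diag_carrier] del: index_mult_mat(1)) (simp add: parity_diag_def)
qed auto

lemma parity_diag_same_mult:
  assumes "B \<in> carrier_mat (m*n) N"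
  shows "parity_diag n m x x * B = x \<cdot>\<^sub>m B"
  by (rule eq_matI) (use assms carrier_matD[OF assms] in \<open>auto simp: index_parity_diag_mult simp del: index_mult_mat(1)\<close>)

lemma Nmat_scale_odd_solution:
  assumes carr: "\<And>j i. i < m \<Longrightarrow> a j i \<in> carrier_mat n n" and "even m" "\<mu> \<noteq> 0"
    and inv: "invertible_mat (Nmat n m a k)"
    and C: "C \<in> carrier_mat (m*n) n" "Nmat n m a k * C = Fmat n m a k m"
  shows "invertible_mat (Nmat n m (scale_odd \<mu> a) k)"
    and "Nmat n m (scale_odd \<mu> a) k * (parity_diag n m 1 \<mu> * C) = Fmat n m (scale_odd \<mu> a) k m"
proof -
  let ?b = "scale_odd \<mu> a" and ?Z = "Zmat n m a k" and ?P = "Pmat n m a k" and ?R = "Rmat n m a k"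
  let ?D = "parity_diag n m \<mu> (1::'a)" and ?E = "parity_diag n m 1 \<mu>"
  have PD: "?P * ?D \<in> carrier_mat (m*n) (m*n)" and EC: "?E * C \<in> carrier_mat (m*n) n"
    using C(1) by auto
  have N': "Nmat n m ?b k = Zmat n m ?b k * (?P * ?D)"
    using Nmat_eq_Zmat_Pmat[OF \<open>even m\<close>, of n ?b k] by (simp add: Pmat_scale_odd[OF carr])
  have "det ?Z * det ?P \<noteq> 0"
    using inv by (simp add: Nmat_eq_Zmat_Pmat[OF \<open>even m\<close>]
        invertible_mat_iff_det[OF mult_carrier_mat[OF Zmat_carrier Pmat_carrier]] det_mult[OF Zmat_carrier Pmat_carrier])
  then have dZ: "det ?Z \<noteq> 0" and dP: "det ?P \<noteq> 0" by auto
  then have invZ: "invertible_mat ?Z" by (simp add: invertible_mat_iff_det[OF Zmat_carrier])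
  show "invertible_mat (Nmat n m ?b k)"
    using det_Zmat_scale_odd_nonzero[OF carr assms(2,3) dZ] dP det_parity_diag_nonzero[of \<mu> 1] \<open>\<mu> \<noteq> 0\<close>
    by (simp add: N' invertible_mat_iff_det[OF mult_carrier_mat[OF Zmat_carrier PD]] det_mult[OF Zmat_carrier PD]
        det_mult[OF Pmat_carrier parity_diag_carrier])
  have "?Z * (?P * C) = Nmat n m a k * C"
    by (simp add: Nmat_eq_Zmat_Pmat[OF \<open>even m\<close>] assoc_mult_mat[OF Zmat_carrier Pmat_carrier C(1)])
  also have "\<dots> = ?Z * ?R"
    using C(2) by (simp add: Fmat_eq_Zmat_Rmat[OF \<open>even m\<close>])
  finally have "?Z * (?P * C) = ?Z * ?R" .
  then have PC: "?P * C = ?R"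
    by (rule invertible_mat_mult_left_cancel[OF Zmat_carrier invZ mult_carrier_mat[OF Pmat_carrier C(1)] Rmat_carrier])
  have "?P * ?D * (?E * C) = ?P * ((?D * ?E) * C)"
    by (simp add: assoc_mult_mat[OF Pmat_carrier parity_diag_carrier EC]
        assoc_mult_mat[OF parity_diag_carrier parity_diag_carrier C(1)])
  also have "\<dots> = ?P * (\<mu> \<cdot>\<^sub>m C)"
    by (simp add: parity_diag_mult_parity_diag parity_diag_same_mult[OF C(1)])
  also have "\<dots> = Rmat n m ?b k"
    using C(1) by (simp add: mult_smult_distrib[OF Pmat_carrier] PC Rmat_scale_odd[OF carr \<open>even m\<close>])
  finally show "Nmat n m ?b k * (?E * C) = Fmat n m ?b k m"
    by (simp add: N' Fmat_eq_Zmat_Rmat[OF \<open>even m\<close>] assoc_mult_mat[OF Zmat_carrier PD EC])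
qed

theorem mainTheorem4:
  fixes n s m Np :: nat and a :: "int \<Rightarrow> nat \<Rightarrow> 'a::field mat" and k :: int
    and \<mu> :: 'a and C :: "'a mat"
  assumes "n \<ge> 1" and "s \<ge> 2" and "m = 2 * s" and "Np \<ge> 1"
    and "\<And>j i. i < m \<Longrightarrow> a j i \<in> carrier_mat n n"
    and "\<And>j i. a (j + int Np) i = a j i"
    and "invertible_mat (Nmat n m a k)"
    and "C \<in> carrier_mat (m*n) n" and "Nmat n m a k * C = Fmat n m a k m"
    and "\<mu> \<noteq> 0"
  shows "invertible_mat (Nmat n m (scale_odd \<mu> a) k) \<and>
    (\<forall>C'. C' \<in> carrier_mat (m*n) n \<and>
          Nmat n m (scale_odd \<mu> a) k * C' = Fmat n m (scale_odd \<mu> a) k m \<longrightarrow>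
      (\<forall>l < s. blk n C' (2*l) = blk n C (2*l) \<and>
               blk n C' (2*l+1) = \<mu> \<cdot>\<^sub>m blk n C (2*l+1)))"
proof -
  have "even m" using assms(3) by simp
  note scaled = Nmat_scale_odd_solution[OF assms(5) this assms(10,7,8,9)]
  show ?thesis
  proof (intro conjI allI impI)
    fix C' assume "C' \<in> carrier_mat (m*n) n \<and>
      Nmat n m (scale_odd \<mu> a) k * C' = Fmat n m (scale_odd \<mu> a) k m"
    then have "C' = parity_diag n m 1 \<mu> * C"
      using scaled(2) invertible_mat_mult_left_cancel[OF Nmat_carrier scaled(1) _
          mult_carrier_mat[OF parity_diag_carrier assms(8)]] by auto
    fix l assume "l < s"
    then show "blk n C' (2*l) = blk n C (2*l)" "blk n C' (2*l+1) = \<mu> \<cdot>\<^sub>m blk n C (2*l+1)"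
      using \<open>C' = _\<close> blk_parity_diag_mult[OF assms(8)] assms(3) by auto
  qed (rule scaled(1))
qed

end
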